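(* There exist constants $A_1,A_2$ depending only on $l$ such that for all $0<\eta<\xi$: $$\int_\eta^\xi V_1(z;\xi,\eta)\,z^{l-\frac12}\,dz\le A_1(\xi-\eta)^l\left(\sqrt\xi-\sqrt\eta\right)\qquad(l\ge-\tfrac12),$$ and $$\int_0^\eta V_2(z;\xi,\eta)\,z^{l-\frac12}\,dz\le\begin{cases}A_2(\xi-\eta)^l\left(\sqrt\xi-\sqrt\eta\right),& l>0,\\[2pt] A_2(\xi-\eta)^{l+\frac12}\left(1-\frac\eta\xi\right)^{l+\frac12},&-\tfrac12\le l<0.\end{cases}$$
   Context: Let ${}_2F_1$ denote the Gauss hypergeometric function (analytically continued to $(-\infty,0)$). For $0<\eta<z<\xi$ put $\sigma_1=\frac{(z-\xi)\eta}{(z-\eta)\xi}$ and $V_1(z;\xi,\eta)=\frac{(z-\eta)^l\xi^l}{z^{2l}}\left|{}_2F_1(-l,-l;1;\sigma_1)\right|$. For $0<z<\eta<\xi$ put $\sigma_2=-\frac{z(\xi-\eta)}{\xi(\eta-z)}$ and $V_2(z;\xi,\eta)=\frac{|\sin(\pi l)|\Gamma^2(1+l)}{\pi\Gamma(2+2l)}\frac{(\xi-\eta)^{1+2l}z}{\xi^{l+1}(\eta-z)^{l+1}}\left|{}_2F_1(1+l,1+l;2+2l;\sigma_2)\right|$. *)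

theory Defs
  imports "HOL-Analysis.Analysis"
begin

definition hyp2f1_series :: "real \<Rightarrow> real \<Rightarrow> real \<Rightarrow> real \<Rightarrow> real" where
  "hyp2f1_series a b c x =
     (\<Sum>n. pochhammer a n * pochhammer b n / (pochhammer c n * fact n) * x ^ n)"

text \<open>Gauss hypergeometric function: the series for |x| < 1, and its analytic
  continuation to the rest of (-inf, 1/2) given by the Pfaff transformation
  2F1(a,b;c;x) = (1-x)^(-a) 2F1(a,c-b;c;x/(x-1)), where |x/(x-1)| < 1.\<close>
definition hyp2f1 :: "real \<Rightarrow> real \<Rightarrow> real \<Rightarrow> real \<Rightarrow> real" where
  "hyp2f1 a b c x =
     (if \<bar>x\<bar> < 1 then hyp2f1_series a b c x
      else (1 - x) powr (- a) * hyp2f1_series a (c - b) c (x / (x - 1)))"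

definition V1 :: "real \<Rightarrow> real \<Rightarrow> real \<Rightarrow> real \<Rightarrow> real" where
  "V1 l z \<xi> \<eta> =
     (let \<sigma>1 = (z - \<xi>) * \<eta> / ((z - \<eta>) * \<xi>) in
      (z - \<eta>) powr l * \<xi> powr l / z powr (2 * l) * \<bar>hyp2f1 (- l) (- l) 1 \<sigma>1\<bar>)"

definition V2 :: "real \<Rightarrow> real \<Rightarrow> real \<Rightarrow> real \<Rightarrow> real" where
  "V2 l z \<xi> \<eta> =
     (let \<sigma>2 = - (z * (\<xi> - \<eta>)) / (\<xi> * (\<eta> - z)) in
      \<bar>sin (pi * l)\<bar> * (Gamma (1 + l))\<^sup>2 / (pi * Gamma (2 + 2 * l))
      * ((\<xi> - \<eta>) powr (1 + 2 * l) * z / (\<xi> powr (l + 1) * (\<eta> - z) powr (l + 1)))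
      * \<bar>hyp2f1 (1 + l) (1 + l) (2 + 2 * l) \<sigma>2\<bar>)"

end

theory Submission
  imports Defs
begin

text \<open>For \<open>x \<le> 0\<close> and \<open>2a < c + 1\<close> one has \<open>|2F1(a,a;c;x)| \<le> K (1 - x)^(1/4 - a)\<close>: on
  \<open>(-1, 0]\<close> the hypergeometric series is alternating with eventually decreasing coefficients,
  and for \<open>x \<le> -1\<close> the Pfaff transformation leaves a series on \<open>[0, 1)\<close> whose coefficients are
  dominated by those of \<open>(1 - y)^(-1/4)\<close>. With this bound the integrands \<open>V1 z^(l-1/2)\<close> and
  \<open>V2 z^(l-1/2)\<close> are dominated by products of powers of \<open>z\<close>, \<open>z - \<eta>\<close>, \<open>\<eta> - z\<close> and \<open>\<xi> - z\<close>.
  Their integrals are computed exactly, after distinguishing whether \<open>\<eta>\<close> is close to \<open>\<xi>\<close> or not;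
  for \<open>l > 0\<close> and \<open>\<eta>\<close> close to \<open>\<xi>\<close> the \<open>V2\<close> integral is split at \<open>\<eta> - (\<xi> - \<eta>)\<close>, since the
  singularity \<open>(\<eta> - z)^(-1-l)\<close> is then only integrable away from \<open>\<eta>\<close>.\<close>

section \<open>Integrals of powers\<close>

lemma set_integral_Ioo_FTC_nonneg:
  fixes f F :: "real \<Rightarrow> real" and u v :: real
  assumes "u < v" and F_cont: "continuous_on {u..v} F"
    and "\<And>x. x \<in> {u<..<v} \<Longrightarrow> DERIV F x :> f x"
    and "\<And>x. x \<in> {u<..<v} \<Longrightarrow> isCont f x"
    and "\<And>x. x \<in> {u<..<v} \<Longrightarrow> 0 \<le> f x"
  shows "set_integrable lborel {u<..<v} f" "(LBINT x:{u<..<v}. f x) = F v - F u"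
proof -
  have "((F \<circ> real_of_ereal) \<longlongrightarrow> F u) (at_right (ereal u))"
    "((F \<circ> real_of_ereal) \<longlongrightarrow> F v) (at_left (ereal v))"
    unfolding ereal_tendsto_simps1
    using continuous_on_Icc_at_rightD[OF F_cont] continuous_on_Icc_at_leftD[OF F_cont] \<open>u < v\<close>
    by auto
  note FTC = interval_integral_FTC_nonneg[of "ereal u" "ereal v" F f, OF _ _ _ _ this]
  show "set_integrable lborel {u<..<v} f"
    using FTC(1) assms by auto
  show "(LBINT x:{u<..<v}. f x) = F v - F u"
    using FTC(2) assms by (auto simp: interval_integral_Ioo)
qed

lemma set_integral_powr_left:
  fixes a u v :: real
  assumes "a > -1" and "u < v"
  shows "set_integrable lborel {u<..<v} (\<lambda>z. (z - u) powr a)"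
    "(LBINT z:{u<..<v}. (z - u) powr a) = (v - u) powr (a + 1) / (a + 1)"
proof -
  have cont: "continuous_on {u..v} (\<lambda>z. (z - u) powr (a + 1) / (a + 1))"
    using assms by (intro continuous_intros continuous_on_powr') auto
  have deriv: "DERIV (\<lambda>z. (z - u) powr (a + 1) / (a + 1)) x :> (x - u) powr a"
    if "x \<in> {u<..<v}" for x
    using that assms by (auto intro!: derivative_eq_intros)
  note FTC = set_integral_Ioo_FTC_nonneg[OF \<open>u < v\<close> cont deriv]
  show "set_integrable lborel {u<..<v} (\<lambda>z. (z - u) powr a)"
    by (rule FTC) (auto intro!: continuous_intros)
  show "(LBINT z:{u<..<v}. (z - u) powr a) = (v - u) powr (a + 1) / (a + 1)"
    by (subst FTC) (auto intro!: continuous_intros)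
qed

lemma set_integral_powr_right:
  fixes a u v w :: real
  assumes "u < v" "v \<le> w" and "a > -1 \<or> v < w \<and> a \<noteq> -1"
  shows "set_integrable lborel {u<..<v} (\<lambda>z. (w - z) powr a)"
    "(LBINT z:{u<..<v}. (w - z) powr a) = ((w - u) powr (a + 1) - (w - v) powr (a + 1)) / (a + 1)"
proof -
  have cont: "continuous_on {u..v} (\<lambda>z. - ((w - z) powr (a + 1) / (a + 1)))"
    using assms by (intro continuous_intros continuous_on_powr') auto
  have deriv: "DERIV (\<lambda>z. - ((w - z) powr (a + 1) / (a + 1))) x :> (w - x) powr a"
    if "x \<in> {u<..<v}" for x
    using that assms by (auto intro!: derivative_eq_intros)
  note FTC = set_integral_Ioo_FTC_nonneg[OF \<open>u < v\<close> cont deriv]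
  show "set_integrable lborel {u<..<v} (\<lambda>z. (w - z) powr a)"
    by (rule FTC) (use assms in \<open>auto intro!: continuous_intros\<close>)
  show "(LBINT z:{u<..<v}. (w - z) powr a) = ((w - u) powr (a + 1) - (w - v) powr (a + 1)) / (a + 1)"
    by (subst FTC) (use assms in \<open>auto intro!: continuous_intros simp: diff_divide_distrib\<close>)
qed

lemma set_integral_le_of_abs_le:
  fixes f g :: "real \<Rightarrow> real"
  assumes "A \<in> sets lborel" "g \<in> borel_measurable lborel" "set_integrable lborel A f"
    and le: "\<And>z. z \<in> A \<Longrightarrow> \<bar>g z\<bar> \<le> f z"
  shows "set_integrable lborel A g" "(LBINT z:A. g z) \<le> (LBINT z:A. f z)"
proof -
  show g_int: "set_integrable lborel A g"
  proof (rule set_integrable_bound[OF assms(3)])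
    show "set_borel_measurable lborel A g"
      unfolding set_borel_measurable_def using assms(1,2) by measurable
    show "AE x in lborel. x \<in> A \<longrightarrow> norm (g x) \<le> norm (f x)"
      using le by (auto intro!: AE_I2 order_trans[OF _ abs_ge_self])
  qed
  show "(LBINT z:A. g z) \<le> (LBINT z:A. f z)"
    using g_int assms(3) by (rule set_integral_mono) (use le in \<open>auto intro: order_trans[OF abs_ge_self]\<close>)
qed

section \<open>Bounds for power series\<close>

lemma eventually_real_ge_sequentially: "\<forall>\<^sub>F n in sequentially. M \<le> real n"
  using filterlim_real_sequentially unfolding filterlim_at_top by blast

lemma alternating_power_series_le:
  fixes e :: "nat \<Rightarrow> real" and x :: real
  assumes e_nonneg: "\<And>k. 0 \<le> e k" and "decseq e" and "-1 < x" "x \<le> 0"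
  shows "summable (\<lambda>k. e k * x ^ k)" "\<bar>\<Sum>k. e k * x ^ k\<bar> \<le> e 0"
proof -
  define t where "t = - x"
  have t: "0 \<le> t" "t < 1"
    using assms by (auto simp: t_def)
  define a where "a k = e k * t ^ k" for k
  have a_nonneg: "0 \<le> a k" for k
    using e_nonneg t by (simp add: a_def)
  have a_decr: "a (Suc k) \<le> a k" for k
  proof -
    have "e (Suc k) * t ^ Suc k \<le> e k * t ^ Suc k"
      using \<open>decseq e\<close> t by (intro mult_right_mono) (auto simp: decseq_Suc_iff)
    also have "\<dots> \<le> e k * t ^ k"
      using e_nonneg t by (intro mult_left_mono) (auto simp: mult_left_le_one_le)
    finally show ?thesis by (simp add: a_def)
  qed
  have "a \<longlonglongrightarrow> 0"
  proof (rule tendsto_sandwich[of "\<lambda>_. 0" _ _ "\<lambda>k. e 0 * t ^ k"])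
    have "a k \<le> e 0 * t ^ k" for k
      unfolding a_def using decseqD[OF \<open>decseq e\<close>, of 0 k] t by (intro mult_right_mono) auto
    then show "\<forall>\<^sub>F k in sequentially. a k \<le> e 0 * t ^ k"
      by simp
    show "(\<lambda>k. e 0 * t ^ k) \<longlonglongrightarrow> 0"
      using t by (intro tendsto_mult_right_zero LIMSEQ_power_zero) auto
  qed (use a_nonneg in auto)
  note leibniz = summable_Leibniz'[OF this a_nonneg a_decr]
  have "(\<lambda>k. e k * x ^ k) = (\<lambda>k. (-1) ^ k * a k)"
    by (simp add: a_def t_def mult.left_commute power_mult_distrib[symmetric])
  then show "summable (\<lambda>k. e k * x ^ k)" "\<bar>\<Sum>k. e k * x ^ k\<bar> \<le> e 0"
    using leibniz(1) leibniz(2)[of 0] leibniz(4)[of 0] by (simp_all add: a_def[of 0])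
qed

lemma alternating_power_series_bounded:
  fixes c :: "nat \<Rightarrow> real"
  assumes "\<forall>\<^sub>F n in sequentially. 0 \<le> c n \<and> c (Suc n) \<le> c n"
  shows "\<exists>K. \<forall>x\<in>{-1<..0}. \<bar>\<Sum>n. c n * x ^ n\<bar> \<le> K"
proof -
  obtain N where mono: "\<And>n. n \<ge> N \<Longrightarrow> 0 \<le> c n \<and> c (Suc n) \<le> c n"
    using assms unfolding eventually_sequentially by blast
  have "\<bar>\<Sum>n. c n * x ^ n\<bar> \<le> (\<Sum>i<N. \<bar>c i\<bar>) + c N" if "-1 < x" "x \<le> 0" for x
  proof -
    have x_pow: "\<bar>x ^ n\<bar> \<le> 1" for n
      unfolding power_abs using that by (intro power_le_one) auto
    have "decseq (\<lambda>k. c (k + N))"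
      using mono by (simp add: decseq_Suc_iff)
    note tail = alternating_power_series_le[of "\<lambda>k. c (k + N)", OF _ this that]
    have tail_eq: "c (k + N) * x ^ (k + N) = x ^ N * (c (k + N) * x ^ k)" for k
      by (simp add: power_add)
    have "summable (\<lambda>k. c (k + N) * x ^ (k + N))"
      unfolding tail_eq using mono by (intro summable_mult tail(1)) simp
    then have "summable (\<lambda>n. c n * x ^ n)"
      using summable_iff_shift[of "\<lambda>n. c n * x ^ n" N] by simp
    then have "(\<Sum>n. c n * x ^ n) = (\<Sum>k. c (k + N) * x ^ (k + N)) + (\<Sum>i<N. c i * x ^ i)"
      by (rule suminf_split_initial_segment)
    also have "(\<Sum>k. c (k + N) * x ^ (k + N)) = x ^ N * (\<Sum>k. c (k + N) * x ^ k)"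
      unfolding tail_eq by (rule suminf_mult[OF tail(1)]) (use mono in simp)
    finally have "\<bar>\<Sum>n. c n * x ^ n\<bar> \<le> \<bar>x ^ N * (\<Sum>k. c (k + N) * x ^ k)\<bar> + \<bar>\<Sum>i<N. c i * x ^ i\<bar>"
      by (simp only: abs_triangle_ineq)
    also have "\<dots> \<le> \<bar>x ^ N\<bar> * \<bar>\<Sum>k. c (k + N) * x ^ k\<bar> + (\<Sum>i<N. \<bar>c i * x ^ i\<bar>)"
      by (rule add_mono[OF eq_refl[OF abs_mult] sum_abs])
    also have "\<dots> \<le> 1 * c N + (\<Sum>i<N. \<bar>c i\<bar>)"
    proof (intro add_mono mult_mono sum_mono)
      show "\<bar>\<Sum>k. c (k + N) * x ^ k\<bar> \<le> c N"
        using tail(2) mono by simp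
      show "\<bar>c i * x ^ i\<bar> \<le> \<bar>c i\<bar>" for i
        unfolding abs_mult using x_pow by (intro mult_left_le) auto
    qed (use x_pow in auto)
    finally show ?thesis by simp
  qed
  then show ?thesis
    by (intro exI[of _ "(\<Sum>i<N. \<bar>c i\<bar>) + c N"]) auto
qed

lemma abs_le_const_mult_of_ratio_le:
  fixes c b :: "nat \<Rightarrow> real"
  assumes b_pos: "\<And>n. b n > 0"
    and "\<forall>\<^sub>F n in sequentially. \<bar>c (Suc n)\<bar> * b n \<le> \<bar>c n\<bar> * b (Suc n)"
  shows "\<exists>E\<ge>0. \<forall>n. \<bar>c n\<bar> \<le> E * b n"
proof -
  obtain N where ratio: "\<And>n. n \<ge> N \<Longrightarrow> \<bar>c (Suc n)\<bar> * b n \<le> \<bar>c n\<bar> * b (Suc n)"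
    using assms(2) unfolding eventually_sequentially by blast
  define E where "E = (\<Sum>i\<le>N. \<bar>c i\<bar> / b i)"
  have initial: "\<bar>c n\<bar> / b n \<le> E" if "n \<le> N" for n
    unfolding E_def using that b_pos by (intro member_le_sum) (auto intro: divide_nonneg_pos)
  have tail: "\<bar>c (N + k)\<bar> / b (N + k) \<le> E" for k
  proof (induction k)
    case (Suc k)
    have "\<bar>c (Suc (N + k))\<bar> / b (Suc (N + k)) \<le> \<bar>c (N + k)\<bar> / b (N + k)"
      using ratio[of "N + k"] b_pos[of "N + k"] b_pos[of "Suc (N + k)"]
      by (simp add: divide_le_eq le_divide_eq mult.commute)
    then show ?case using Suc by simp
  qed (use initial in simp)
  have "\<bar>c n\<bar> / b n \<le> E" for n
  proof (cases "n \<le> N")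
    case False
    then show ?thesis using tail[of "n - N"] by simp
  qed (rule initial)
  moreover have "E \<ge> 0"
    using initial[of 0] divide_nonneg_pos[OF abs_ge_zero b_pos[of 0], of "c 0"] by simp
  ultimately show ?thesis
    using b_pos by (auto simp: pos_divide_le_eq)
qed

lemma sums_pochhammer_binomial:
  fixes d y :: real
  assumes "\<bar>y\<bar> < 1"
  shows "(\<lambda>n. pochhammer d n / fact n * y ^ n) sums (1 - y) powr (- d)"
proof -
  have "(\<lambda>n. ((- d) gchoose n) * (- y) ^ n) sums (1 + - y) powr (- d)"
    by (rule gen_binomial_real) (use assms in auto)
  moreover have "((- d) gchoose n) * (- y) ^ n = pochhammer d n / fact n * y ^ n" for n
    by (simp add: gbinomial_pochhammer power_minus[of y] field_simps)
  ultimately show ?thesis by simp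
qed

lemma abs_power_series_le_binomial:
  fixes c :: "nat \<Rightarrow> real" and d E y :: real
  assumes E: "\<And>n. \<bar>c n\<bar> \<le> E * (pochhammer d n / fact n)" and "0 \<le> y" "y < 1"
  shows "\<bar>\<Sum>n. c n * y ^ n\<bar> \<le> E * (1 - y) powr (- d)"
proof -
  have majorant: "(\<lambda>n. E * (pochhammer d n / fact n * y ^ n)) sums (E * (1 - y) powr (- d))"
    using sums_mult[OF sums_pochhammer_binomial[of y d], of E] assms by simp
  have le: "norm (c n * y ^ n) \<le> E * (pochhammer d n / fact n * y ^ n)" for n
    using mult_right_mono[OF E[of n], of "y ^ n"] assms by (auto simp: abs_mult mult.assoc)
  have summable: "summable (\<lambda>n. norm (c n * y ^ n))"
    by (rule summable_comparison_test'[OF sums_summable[OF majorant], where N = 0]) (use le in simp)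
  have "norm (\<Sum>n. c n * y ^ n) \<le> (\<Sum>n. norm (c n * y ^ n))"
    by (rule summable_norm[OF summable])
  also have "\<dots> \<le> (\<Sum>n. E * (pochhammer d n / fact n * y ^ n))"
    by (rule suminf_le[OF le summable sums_summable[OF majorant]])
  finally show ?thesis
    using sums_unique[OF majorant] by simp
qed

lemma power_series_le_binomial:
  fixes c :: "nat \<Rightarrow> real" and d :: real
  assumes "d > 0"
    and "\<forall>\<^sub>F n in sequentially. \<bar>c (Suc n)\<bar> * (real n + 1) \<le> \<bar>c n\<bar> * (real n + d)"
  shows "\<exists>E\<ge>0. \<forall>y\<in>{0..<1}. \<bar>\<Sum>n. c n * y ^ n\<bar> \<le> E * (1 - y) powr (- d)"
proof -
  define b where "b n = pochhammer d n / fact n" for n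
  have b_pos: "b n > 0" for n
    using \<open>d > 0\<close> by (auto simp: b_def pochhammer_pos)
  have b_Suc: "b (Suc n) = b n * (real n + d) / (real n + 1)" for n
    by (simp add: b_def pochhammer_Suc field_simps)
  have ratio: "\<forall>\<^sub>F n in sequentially. \<bar>c (Suc n)\<bar> * b n \<le> \<bar>c n\<bar> * b (Suc n)"
    using assms(2)
  proof eventually_elim
    case (elim n)
    have "\<bar>c (Suc n)\<bar> * b n = \<bar>c (Suc n)\<bar> * (real n + 1) * (b n / (real n + 1))"
      by (simp add: field_simps)
    also have "\<dots> \<le> \<bar>c n\<bar> * (real n + d) * (b n / (real n + 1))"
      using elim b_pos[of n] by (intro mult_right_mono) auto
    also have "\<dots> = \<bar>c n\<bar> * b (Suc n)"
      by (simp add: b_Suc)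
    finally show ?case .
  qed
  obtain E where "E \<ge> 0" and "\<And>n. \<bar>c n\<bar> \<le> E * b n"
    using abs_le_const_mult_of_ratio_le[OF b_pos ratio] by blast
  then show ?thesis
    unfolding b_def using abs_power_series_le_binomial by (intro exI[of _ E]) auto
qed

section \<open>A bound for the hypergeometric function on the negative axis\<close>

definition hyp2f1_coeff :: "real \<Rightarrow> real \<Rightarrow> real \<Rightarrow> nat \<Rightarrow> real" where
  "hyp2f1_coeff a b c n = pochhammer a n * pochhammer b n / (pochhammer c n * fact n)"

lemma hyp2f1_series_eq_suminf_coeff:
  "hyp2f1_series a b c x = (\<Sum>n. hyp2f1_coeff a b c n * x ^ n)"
  by (simp add: hyp2f1_series_def hyp2f1_coeff_def)

lemma hyp2f1_coeff_Suc:
  assumes "c > 0"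
  shows "hyp2f1_coeff a b c (Suc n) =
    hyp2f1_coeff a b c n * ((a + real n) * (b + real n) / ((c + real n) * (real n + 1)))"
proof -
  have "pochhammer c n > 0" "c + real n > 0"
    using assms by (simp_all add: pochhammer_pos add_pos_nonneg)
  then show ?thesis
    by (simp add: hyp2f1_coeff_def pochhammer_Suc field_simps)
qed

lemma hyp2f1_series_diag_bounded:
  assumes "c > 0" and "2 * a < c + 1"
  shows "\<exists>K. \<forall>x\<in>{-1<..0}. \<bar>hyp2f1_series a a c x\<bar> \<le> K"
proof -
  have nonneg: "0 \<le> hyp2f1_coeff a a c n" for n
    using pochhammer_pos[OF \<open>c > 0\<close>, of n]
    by (simp add: hyp2f1_coeff_def power2_eq_square[symmetric])
  have "\<forall>\<^sub>F n in sequentially. a\<^sup>2 / (c + 1 - 2 * a) \<le> real n"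
    by (rule eventually_real_ge_sequentially)
  then have "\<forall>\<^sub>F n in sequentially.
      0 \<le> hyp2f1_coeff a a c n \<and> hyp2f1_coeff a a c (Suc n) \<le> hyp2f1_coeff a a c n"
  proof eventually_elim
    case (elim n)
    then have "a\<^sup>2 \<le> real n * (c + 1 - 2 * a)"
      using assms by (simp add: pos_divide_le_eq)
    then have "(a + real n) * (a + real n) \<le> (c + real n) * (real n + 1)"
      using assms by (simp add: algebra_simps power2_eq_square)
    then have "(a + real n) * (a + real n) / ((c + real n) * (real n + 1)) \<le> 1"
      using assms by (simp add: divide_le_eq_1 add_pos_nonneg)
    then have "hyp2f1_coeff a a c n * ((a + real n) * (a + real n) / ((c + real n) * (real n + 1)))
        \<le> hyp2f1_coeff a a c n"
      using nonneg[of n] by (rule mult_left_le)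
    then show ?case
      using nonneg[of n] hyp2f1_coeff_Suc[OF \<open>c > 0\<close>, of a a n] by simp
  qed
  then show ?thesis
    unfolding hyp2f1_series_eq_suminf_coeff by (rule alternating_power_series_bounded)
qed

lemma hyp2f1_series_le_binomial:
  assumes "c > 0" "d > 0" and "a + b < c + d"
  shows "\<exists>E\<ge>0. \<forall>y\<in>{0..<1}. \<bar>hyp2f1_series a b c y\<bar> \<le> E * (1 - y) powr (- d)"
proof -
  define k where "k = c + d - a - b"
  have "k > 0" using assms by (simp add: k_def)
  have "\<forall>\<^sub>F n in sequentially. \<bar>a\<bar> + \<bar>b\<bar> + \<bar>a * b\<bar> / k \<le> real n"
    by (rule eventually_real_ge_sequentially)
  then have "\<forall>\<^sub>F n in sequentially.
      \<bar>hyp2f1_coeff a b c (Suc n)\<bar> * (real n + 1) \<le> \<bar>hyp2f1_coeff a b c n\<bar> * (real n + d)"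
  proof eventually_elim
    case (elim n)
    have "0 \<le> \<bar>a * b\<bar> / k"
      using \<open>k > 0\<close> by simp
    then have n_ge: "\<bar>a\<bar> + \<bar>b\<bar> \<le> real n" "\<bar>a * b\<bar> / k \<le> real n"
      using elim abs_ge_zero[of a] abs_ge_zero[of b] by linarith+
    from n_ge(2) have "\<bar>a * b\<bar> \<le> real n * k"
      using \<open>k > 0\<close> by (simp add: pos_divide_le_eq)
    moreover have "(c + real n) * (real n + d) - (a + real n) * (b + real n) = real n * k + c * d - a * b"
      by (simp add: k_def algebra_simps)
    moreover have "c * d > 0" using assms by simp
    moreover have "0 \<le> (a + real n) * (b + real n)"
      using n_ge(1) by (intro mult_nonneg_nonneg) auto
    ultimately have "\<bar>(a + real n) * (b + real n)\<bar> \<le> (c + real n) * (real n + d)"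
      using abs_ge_self[of "a * b"] by (simp add: mult.commute)
    then have "\<bar>(a + real n) * (b + real n)\<bar> / (c + real n) \<le> real n + d"
      using assms by (simp add: divide_le_eq add_pos_nonneg mult.commute)
    then have "\<bar>hyp2f1_coeff a b c n\<bar> * (\<bar>(a + real n) * (b + real n)\<bar> / (c + real n))
        \<le> \<bar>hyp2f1_coeff a b c n\<bar> * (real n + d)"
      by (rule mult_left_mono) simp
    then show ?case
      using hyp2f1_coeff_Suc[OF \<open>c > 0\<close>, of a b n] assms
      by (simp add: abs_mult add_pos_nonneg)
  qed
  then show ?thesis
    unfolding hyp2f1_series_eq_suminf_coeff by (rule power_series_le_binomial[OF \<open>d > 0\<close>])
qed

lemma two_powr_neg_abs_le_powr:
  fixes t e :: real
  assumes "1 \<le> t" "t \<le> 2"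
  shows "2 powr (- \<bar>e\<bar>) \<le> t powr e"
proof (cases "e \<ge> 0")
  case True
  then have "2 powr (- \<bar>e\<bar>) \<le> 1"
    by (simp add: powr_minus_divide ge_one_powr_ge_zero)
  also have "1 \<le> t powr e"
    using assms True by (intro ge_one_powr_ge_zero) auto
  finally show ?thesis .
next
  case False
  then show ?thesis
    using assms by (auto intro: powr_mono2')
qed

lemma abs_hyp2f1_diag_le_powr:
  assumes "c > 0" "2 * a < c + 1" "d > 0"
  shows "\<exists>K\<ge>0. \<forall>x\<le>0. \<bar>hyp2f1 a a c x\<bar> \<le> K * (1 - x) powr (d - a)"
proof -
  obtain K0 where K0: "\<And>x. x \<in> {-1<..0} \<Longrightarrow> \<bar>hyp2f1_series a a c x\<bar> \<le> K0"
    using hyp2f1_series_diag_bounded[OF assms(1,2)] by blast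
  obtain E where "E \<ge> 0" and E: "\<And>y. y \<in> {0..<1} \<Longrightarrow> \<bar>hyp2f1_series a (c - a) c y\<bar> \<le> E * (1 - y) powr (- d)"
    using hyp2f1_series_le_binomial[OF assms(1,3), where a = a and b = "c - a"] assms(3) by auto
  have "K0 \<ge> 0"
    using K0[of 0] by simp
  define K where "K = K0 * 2 powr \<bar>d - a\<bar> + E"
  have "\<bar>hyp2f1 a a c x\<bar> \<le> K * (1 - x) powr (d - a)" if "x \<le> 0" for x
  proof (cases "x > -1")
    case True
    have "\<bar>hyp2f1 a a c x\<bar> \<le> K0 * 2 powr \<bar>d - a\<bar> * 2 powr (- \<bar>d - a\<bar>)"
      using K0[of x] True \<open>x \<le> 0\<close> by (simp add: hyp2f1_def powr_minus field_simps)
    also have "\<dots> \<le> K0 * 2 powr \<bar>d - a\<bar> * (1 - x) powr (d - a)"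
      using True \<open>x \<le> 0\<close> \<open>K0 \<ge> 0\<close> by (intro mult_left_mono two_powr_neg_abs_le_powr) auto
    also have "\<dots> \<le> K * (1 - x) powr (d - a)"
      unfolding K_def using \<open>E \<ge> 0\<close> by (intro mult_right_mono) auto
    finally show ?thesis .
  next
    case False
    define y where "y = x / (x - 1)"
    have y: "y \<in> {0..<1}" "1 - y = inverse (1 - x)"
      using False by (auto simp: y_def field_simps)
    have "\<bar>hyp2f1 a a c x\<bar> = (1 - x) powr (- a) * \<bar>hyp2f1_series a (c - a) c y\<bar>"
      using False by (simp add: hyp2f1_def y_def abs_mult)
    also have "\<dots> \<le> (1 - x) powr (- a) * (E * (1 - x) powr d)"
      using E[OF y(1)] by (intro mult_left_mono) (simp_all add: y(2) powr_minus inverse_powr)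
    also have "\<dots> = E * (1 - x) powr (d - a)"
      by (simp add: powr_add[symmetric])
    also have "\<dots> \<le> K * (1 - x) powr (d - a)"
      unfolding K_def using \<open>K0 \<ge> 0\<close> by (intro mult_right_mono) auto
    finally show ?thesis .
  qed
  moreover have "K \<ge> 0"
    unfolding K_def using \<open>K0 \<ge> 0\<close> \<open>E \<ge> 0\<close> by simp
  ultimately show ?thesis by blast
qed

lemma hyp2f1_series_measurable [measurable]: "hyp2f1_series a b c \<in> borel_measurable borel"
  unfolding hyp2f1_series_def[abs_def] suminf_eq_lim by measurable

lemma hyp2f1_measurable [measurable]: "hyp2f1 a b c \<in> borel_measurable borel"
  unfolding hyp2f1_def[abs_def] by measurable

lemma V1_measurable [measurable]: "(\<lambda>z. V1 l z \<xi> \<eta>) \<in> borel_measurable borel"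
  unfolding V1_def Let_def by measurable

lemma V2_measurable [measurable]: "(\<lambda>z. V2 l z \<xi> \<eta>) \<in> borel_measurable borel"
  unfolding V2_def Let_def by measurable

section \<open>The integral of \<open>V1\<close>\<close>

lemma V1_powr_le:
  fixes l K \<xi> \<eta> z :: real
  assumes K: "\<And>x. x \<le> 0 \<Longrightarrow> \<bar>hyp2f1 (- l) (- l) 1 x\<bar> \<le> K * (1 - x) powr (l + 1/4)"
    and "0 < \<eta>" "\<eta> < z" "z < \<xi>"
  shows "\<bar>V1 l z \<xi> \<eta> * z powr (l - 1/2)\<bar> \<le>
     K * (\<xi> - \<eta>) powr (l + 1/4) * \<xi> powr (- 1/4) * (z powr (- 1/4) * (z - \<eta>) powr (- 1/4))"
proof -
  define \<sigma> where "\<sigma> = (z - \<xi>) * \<eta> / ((z - \<eta>) * \<xi>)"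
  have "\<sigma> \<le> 0"
    using assms unfolding \<sigma>_def by (intro divide_nonpos_pos mult_nonpos_nonneg) auto
  have one_minus_\<sigma>: "1 - \<sigma> = z * (\<xi> - \<eta>) / ((z - \<eta>) * \<xi>)"
    using assms unfolding \<sigma>_def by (simp add: field_simps)
  define W where "W = (z - \<eta>) powr l * \<xi> powr l / z powr (2 * l)"
  have "W \<ge> 0" unfolding W_def by simp
  have "\<bar>V1 l z \<xi> \<eta> * z powr (l - 1/2)\<bar> = W * \<bar>hyp2f1 (- l) (- l) 1 \<sigma>\<bar> * z powr (l - 1/2)"
    using \<open>W \<ge> 0\<close> by (simp add: V1_def W_def \<sigma>_def Let_def abs_mult)
  also have "\<dots> \<le> W * (K * (1 - \<sigma>) powr (l + 1/4)) * z powr (l - 1/2)"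
    using K[OF \<open>\<sigma> \<le> 0\<close>] \<open>W \<ge> 0\<close> by (intro mult_right_mono mult_left_mono) auto
  also have "\<dots> = K * (W * (1 - \<sigma>) powr (l + 1/4) * z powr (l - 1/2))"
    by simp
  also have "W * (1 - \<sigma>) powr (l + 1/4) * z powr (l - 1/2) =
      (\<xi> - \<eta>) powr (l + 1/4) * \<xi> powr (- 1/4) * (z powr (- 1/4) * (z - \<eta>) powr (- 1/4))"
    using assms unfolding one_minus_\<sigma> W_def
    by (subst ln_inj_iff[symmetric]) (simp_all add: ln_mult ln_div, simp add: algebra_simps)
  finally show ?thesis by (simp add: mult_ac)
qed

lemma sqrt_diff_lower_bounds:
  fixes \<xi> \<eta> :: real
  assumes "0 < \<eta>" "\<eta> < \<xi>"
  shows "(\<xi> - \<eta>) / sqrt \<xi> \<le> 2 * (sqrt \<xi> - sqrt \<eta>)"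
    and "\<xi> \<le> 4 * \<eta> \<Longrightarrow> (\<xi> - \<eta>) / sqrt \<eta> \<le> 3 * (sqrt \<xi> - sqrt \<eta>)"
    and "4 * \<eta> \<le> \<xi> \<Longrightarrow> sqrt (\<xi> - \<eta>) \<le> 2 * (sqrt \<xi> - sqrt \<eta>)"
    and "2 * \<eta> \<le> \<xi> \<Longrightarrow> sqrt \<eta> \<le> 3 * (sqrt \<xi> - sqrt \<eta>)"
proof -
  define s t where "s = sqrt \<xi>" and "t = sqrt \<eta>"
  have "0 < t" "t < s"
    using assms by (auto simp: s_def t_def)
  have diff: "\<xi> - \<eta> = (s - t) * (s + t)"
    using assms by (simp add: s_def t_def algebra_simps)
  show "(\<xi> - \<eta>) / sqrt \<xi> \<le> 2 * (sqrt \<xi> - sqrt \<eta>)"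
  proof -
    have "(s - t) * (s + t) \<le> (s - t) * (2 * s)"
      using \<open>t < s\<close> by (intro mult_left_mono) auto
    then have "(s - t) * (s + t) \<le> 2 * (s - t) * s"
      by (simp only: ac_simps)
    then show ?thesis
      unfolding s_def[symmetric] t_def[symmetric] diff using \<open>0 < t\<close> \<open>t < s\<close> by (simp add: pos_divide_le_eq)
  qed
  show "(\<xi> - \<eta>) / sqrt \<eta> \<le> 3 * (sqrt \<xi> - sqrt \<eta>)" if "\<xi> \<le> 4 * \<eta>"
  proof -
    have "s \<le> 2 * t"
      using real_sqrt_le_mono[OF that] by (simp add: s_def t_def real_sqrt_mult)
    then have "(s - t) * (s + t) \<le> (s - t) * (3 * t)"
      using \<open>t < s\<close> by (intro mult_left_mono) auto
    then have "(s - t) * (s + t) \<le> 3 * (s - t) * t"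
      by (simp only: ac_simps)
    then show ?thesis
      unfolding s_def[symmetric] t_def[symmetric] diff using \<open>0 < t\<close> by (simp add: pos_divide_le_eq)
  qed
  show "sqrt (\<xi> - \<eta>) \<le> 2 * (sqrt \<xi> - sqrt \<eta>)" if "4 * \<eta> \<le> \<xi>"
  proof -
    have "sqrt (\<xi> - \<eta>) \<le> sqrt \<xi>" "2 * sqrt \<eta> \<le> sqrt \<xi>"
      using assms real_sqrt_le_mono[OF that] by (simp_all add: real_sqrt_mult)
    then show ?thesis by argo
  qed
  show "sqrt \<eta> \<le> 3 * (sqrt \<xi> - sqrt \<eta>)" if "2 * \<eta> \<le> \<xi>"
  proof -
    have "sqrt (4\<^sup>2 * \<eta>) \<le> sqrt (3\<^sup>2 * \<xi>)"
      using that assms by (intro real_sqrt_le_mono) simp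
    then show ?thesis
      by (simp only: real_sqrt_mult real_sqrt_abs) simp
  qed
qed

lemma V1_kernel_integral_le_quarter:
  fixes \<xi> \<eta> :: real
  assumes "0 < \<eta>" "\<eta> < \<xi>"
  shows "set_integrable lborel {\<eta><..<\<xi>} (\<lambda>z. z powr (- 1/4) * (z - \<eta>) powr (- 1/4))"
    "(LBINT z:{\<eta><..<\<xi>}. z powr (- 1/4) * (z - \<eta>) powr (- 1/4)) \<le> \<eta> powr (- 1/4) * ((\<xi> - \<eta>) powr (3/4) / (3/4))"
proof -
  have powr: "set_integrable lborel {\<eta><..<\<xi>} (\<lambda>z. (z - \<eta>) powr (- 1/4))"
      "(LBINT z:{\<eta><..<\<xi>}. (z - \<eta>) powr (- 1/4)) = (\<xi> - \<eta>) powr (3/4) / (3/4)"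
    using set_integral_powr_left[of "- 1/4" \<eta> \<xi>] assms by simp_all
  have "\<bar>z powr (- 1/4) * (z - \<eta>) powr (- 1/4)\<bar> \<le> \<eta> powr (- 1/4) * (z - \<eta>) powr (- 1/4)"
    if "z \<in> {\<eta><..<\<xi>}" for z
    using that assms by (auto intro!: mult_right_mono powr_mono2')
  note bound = set_integral_le_of_abs_le[OF _ _ set_integrable_mult_right[OF powr(1)] this]
  show "set_integrable lborel {\<eta><..<\<xi>} (\<lambda>z. z powr (- 1/4) * (z - \<eta>) powr (- 1/4))"
    using bound(1) by simp
  show "(LBINT z:{\<eta><..<\<xi>}. z powr (- 1/4) * (z - \<eta>) powr (- 1/4)) \<le> \<eta> powr (- 1/4) * ((\<xi> - \<eta>) powr (3/4) / (3/4))"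
    using bound(2) unfolding set_integral_mult_right powr(2) by simp
qed

lemma V1_kernel_integral_le_half:
  fixes \<xi> \<eta> :: real
  assumes "0 < \<eta>" "\<eta> < \<xi>"
  shows "(LBINT z:{\<eta><..<\<xi>}. z powr (- 1/4) * (z - \<eta>) powr (- 1/4)) \<le> 2 * sqrt (\<xi> - \<eta>)"
proof -
  have powr: "set_integrable lborel {\<eta><..<\<xi>} (\<lambda>z. (z - \<eta>) powr (- 1/2))"
      "(LBINT z:{\<eta><..<\<xi>}. (z - \<eta>) powr (- 1/2)) = 2 * sqrt (\<xi> - \<eta>)"
    using set_integral_powr_left[of "- 1/2" \<eta> \<xi>] assms by (simp_all add: powr_half_sqrt)
  have "\<bar>z powr (- 1/4) * (z - \<eta>) powr (- 1/4)\<bar> \<le> (z - \<eta>) powr (- 1/2)" if "z \<in> {\<eta><..<\<xi>}" for z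
  proof -
    have "\<bar>z powr (- 1/4) * (z - \<eta>) powr (- 1/4)\<bar> \<le> (z - \<eta>) powr (- 1/4) * (z - \<eta>) powr (- 1/4)"
      using that assms by (auto intro!: mult_right_mono powr_mono2')
    also have "\<dots> = (z - \<eta>) powr (- 1/2)"
      by (simp add: powr_add[symmetric])
    finally show ?thesis .
  qed
  from set_integral_le_of_abs_le(2)[OF _ _ powr(1) this] show ?thesis
    unfolding powr(2) by simp
qed

lemma V1_kernel_integral_le:
  fixes \<xi> \<eta> :: real
  assumes "0 < \<eta>" "\<eta> < \<xi>"
  shows "\<xi> powr (- 1/4) * (LBINT z:{\<eta><..<\<xi>}. z powr (- 1/4) * (z - \<eta>) powr (- 1/4))
    \<le> 4 * (\<xi> - \<eta>) powr (- 1/4) * (sqrt \<xi> - sqrt \<eta>)"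
proof -
  let ?I = "LBINT z:{\<eta><..<\<xi>}. z powr (- 1/4) * (z - \<eta>) powr (- 1/4)"
  define \<epsilon> where "\<epsilon> = \<xi> - \<eta>"
  have "\<epsilon> > 0" using assms by (simp add: \<epsilon>_def)
  have "0 \<le> ?I"
    unfolding set_lebesgue_integral_def by (rule integral_nonneg_AE) (simp add: indicator_def)
  show ?thesis
  proof (cases "\<xi> \<le> 4 * \<eta>")
    case True
    have "\<xi> powr (- 1/4) * ?I \<le> \<eta> powr (- 1/4) * (\<eta> powr (- 1/4) * (\<epsilon> powr (3/4) / (3/4)))"
      using V1_kernel_integral_le_quarter(2)[OF assms] assms \<open>0 \<le> ?I\<close>
      unfolding \<epsilon>_def by (intro mult_mono powr_mono2') simp_all
    also have "\<dots> = 4/3 * \<epsilon> powr (- 1/4) * (\<epsilon> / sqrt \<eta>)"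
      using assms \<open>\<epsilon> > 0\<close> by (simp add: powr_add[symmetric] powr_minus_divide powr_half_sqrt field_simps)
    also have "\<dots> \<le> 4/3 * \<epsilon> powr (- 1/4) * (3 * (sqrt \<xi> - sqrt \<eta>))"
      using sqrt_diff_lower_bounds(2)[OF assms True] by (intro mult_left_mono) (simp_all add: \<epsilon>_def)
    also have "\<dots> = 4 * \<epsilon> powr (- 1/4) * (sqrt \<xi> - sqrt \<eta>)"
      by simp
    finally show ?thesis
      by (simp add: \<epsilon>_def)
  next
    case False
    have "\<xi> powr (- 1/4) * ?I \<le> \<epsilon> powr (- 1/4) * (2 * sqrt \<epsilon>)"
      using V1_kernel_integral_le_half[OF assms] assms \<open>\<epsilon> > 0\<close> \<open>0 \<le> ?I\<close>
      unfolding \<epsilon>_def by (intro mult_mono powr_mono2') simp_all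
    also have "\<dots> \<le> \<epsilon> powr (- 1/4) * (2 * (2 * (sqrt \<xi> - sqrt \<eta>)))"
      using sqrt_diff_lower_bounds(3)[OF assms] False by (intro mult_left_mono) (simp_all add: \<epsilon>_def)
    also have "\<dots> = 4 * \<epsilon> powr (- 1/4) * (sqrt \<xi> - sqrt \<eta>)"
      by simp
    finally show ?thesis
      by (simp add: \<epsilon>_def)
  qed
qed

lemma V1_integral_le:
  fixes l K \<xi> \<eta> :: real
  assumes "K \<ge> 0" and K: "\<And>x. x \<le> 0 \<Longrightarrow> \<bar>hyp2f1 (- l) (- l) 1 x\<bar> \<le> K * (1 - x) powr (l + 1/4)"
    and "0 < \<eta>" "\<eta> < \<xi>"
  shows "set_integrable lborel {\<eta><..<\<xi>} (\<lambda>z. V1 l z \<xi> \<eta> * z powr (l - 1/2))"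
    "(LBINT z:{\<eta><..<\<xi>}. V1 l z \<xi> \<eta> * z powr (l - 1/2)) \<le> 4 * K * (\<xi> - \<eta>) powr l * (sqrt \<xi> - sqrt \<eta>)"
proof -
  let ?k = "\<lambda>z. z powr (- 1/4) * (z - \<eta>) powr (- 1/4)"
  define C where "C = K * (\<xi> - \<eta>) powr (l + 1/4)"
  note kernel = V1_kernel_integral_le_quarter(1)[OF assms(3,4)] V1_kernel_integral_le[OF assms(3,4)]
  have le: "\<bar>V1 l z \<xi> \<eta> * z powr (l - 1/2)\<bar> \<le> C * \<xi> powr (- 1/4) * ?k z" if "z \<in> {\<eta><..<\<xi>}" for z
    using V1_powr_le[OF K, of \<eta> z \<xi>] that assms unfolding C_def by simp
  have "(\<lambda>z. V1 l z \<xi> \<eta> * z powr (l - 1/2)) \<in> borel_measurable lborel"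
    by measurable
  note bound = set_integral_le_of_abs_le[OF _ this set_integrable_mult_right[OF kernel(1)] le]
  show "set_integrable lborel {\<eta><..<\<xi>} (\<lambda>z. V1 l z \<xi> \<eta> * z powr (l - 1/2))"
    using bound(1) by simp
  have "(LBINT z:{\<eta><..<\<xi>}. V1 l z \<xi> \<eta> * z powr (l - 1/2))
      \<le> C * (\<xi> powr (- 1/4) * (LBINT z:{\<eta><..<\<xi>}. ?k z))"
    using bound(2) by (simp add: set_integral_mult_right mult.assoc)
  also have "\<dots> \<le> C * (4 * (\<xi> - \<eta>) powr (- 1/4) * (sqrt \<xi> - sqrt \<eta>))"
    using kernel(2) \<open>K \<ge> 0\<close> unfolding C_def by (intro mult_left_mono) auto
  also have "\<dots> = 4 * K * (\<xi> - \<eta>) powr l * (sqrt \<xi> - sqrt \<eta>)"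
    unfolding C_def by (simp add: powr_add[symmetric])
  finally show "(LBINT z:{\<eta><..<\<xi>}. V1 l z \<xi> \<eta> * z powr (l - 1/2))
      \<le> 4 * K * (\<xi> - \<eta>) powr l * (sqrt \<xi> - sqrt \<eta>)" .
qed

section \<open>The integral of \<open>V2\<close>\<close>

definition V2_prefactor :: "real \<Rightarrow> real" where
  "V2_prefactor l = \<bar>sin (pi * l)\<bar> * (Gamma (1 + l))\<^sup>2 / (pi * Gamma (2 + 2 * l))"

lemma V2_powr_le:
  fixes l K \<xi> \<eta> z :: real
  assumes "l \<ge> - 1/2" "K \<ge> 0"
    and K: "\<And>x. x \<le> 0 \<Longrightarrow> \<bar>hyp2f1 (1 + l) (1 + l) (2 + 2 * l) x\<bar> \<le> K * (1 - x) powr (- l - 3/4)"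
    and "0 < z" "z < \<eta>" "\<eta> < \<xi>"
  shows "\<bar>V2 l z \<xi> \<eta> * z powr (l - 1/2)\<bar> \<le>
     \<bar>V2_prefactor l\<bar> * K * (\<xi> - \<eta>) powr (1 + 2 * l) * \<xi> powr (- 1/4) * \<eta> powr (- 1/4) *
     ((\<eta> - z) powr (- 1/4) * (\<xi> - z) powr (- l - 3/4))"
proof -
  define \<sigma> where "\<sigma> = - (z * (\<xi> - \<eta>)) / (\<xi> * (\<eta> - z))"
  have "\<sigma> \<le> 0"
    using assms unfolding \<sigma>_def by (intro divide_nonpos_pos) auto
  have one_minus_\<sigma>: "1 - \<sigma> = \<eta> * (\<xi> - z) / (\<xi> * (\<eta> - z))"
    using assms unfolding \<sigma>_def by (simp add: field_simps)
  define W where "W = (\<xi> - \<eta>) powr (1 + 2 * l) * z / (\<xi> powr (l + 1) * (\<eta> - z) powr (l + 1))"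
  define P where "P = (\<xi> - \<eta>) powr (1 + 2 * l) * \<xi> powr (- 1/4) * \<eta> powr (- l - 3/4) *
      ((\<eta> - z) powr (- 1/4) * (\<xi> - z) powr (- l - 3/4))"
  define C where "C = \<bar>V2_prefactor l\<bar> * K"
  have "W \<ge> 0" "P \<ge> 0" "C \<ge> 0"
    using assms by (simp_all add: W_def P_def C_def)
  have W_eq: "W * (1 - \<sigma>) powr (- l - 3/4) * z powr (l - 1/2) = P * z powr (l + 1/2)"
    using assms unfolding one_minus_\<sigma> W_def P_def
    by (subst ln_inj_iff[symmetric]) (simp_all add: ln_mult ln_div, simp add: field_simps)
  have "\<bar>V2 l z \<xi> \<eta> * z powr (l - 1/2)\<bar> = \<bar>V2_prefactor l\<bar> * W * \<bar>hyp2f1 (1 + l) (1 + l) (2 + 2 * l) \<sigma>\<bar> * z powr (l - 1/2)"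
    using \<open>W \<ge> 0\<close> \<open>0 < z\<close> by (simp add: V2_def V2_prefactor_def W_def \<sigma>_def Let_def abs_mult)
  also have "\<dots> \<le> \<bar>V2_prefactor l\<bar> * W * (K * (1 - \<sigma>) powr (- l - 3/4)) * z powr (l - 1/2)"
    using K[OF \<open>\<sigma> \<le> 0\<close>] \<open>W \<ge> 0\<close> by (intro mult_right_mono mult_left_mono) auto
  also have "\<dots> = C * (P * z powr (l + 1/2))"
    unfolding W_eq[symmetric] C_def by (simp add: mult_ac)
  also have "\<dots> \<le> C * (P * \<eta> powr (l + 1/2))"
    using assms \<open>C \<ge> 0\<close> \<open>P \<ge> 0\<close> by (intro mult_left_mono powr_mono2) auto
  also have "\<dots> = C * (\<xi> - \<eta>) powr (1 + 2 * l) * \<xi> powr (- 1/4) * \<eta> powr (- 1/4) *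
      ((\<eta> - z) powr (- 1/4) * (\<xi> - z) powr (- l - 3/4))"
    unfolding P_def by (simp add: mult_ac powr_add[symmetric])
  finally show ?thesis
    unfolding C_def .
qed

definition V2_kernel :: "real \<Rightarrow> real \<Rightarrow> real \<Rightarrow> real \<Rightarrow> real" where
  "V2_kernel p \<xi> \<eta> z = (\<eta> - z) powr (- 1/4) * (\<xi> - z) powr p"

lemma V2_kernel_measurable [measurable]: "V2_kernel p \<xi> \<eta> \<in> borel_measurable lborel"
  unfolding V2_kernel_def[abs_def] by measurable

lemma V2_kernel_integral_le_const:
  fixes p b u \<xi> \<eta> :: real
  assumes "u < \<eta>" "\<eta> < \<xi>" "p \<le> 0" "0 < b" "b \<le> \<xi> - \<eta>"
  shows "set_integrable lborel {u<..<\<eta>} (V2_kernel p \<xi> \<eta>)"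
    "(LBINT z:{u<..<\<eta>}. V2_kernel p \<xi> \<eta> z) \<le> b powr p * ((\<eta> - u) powr (3/4) / (3/4))"
proof -
  have powr: "set_integrable lborel {u<..<\<eta>} (\<lambda>z. (\<eta> - z) powr (- 1/4))"
    "(LBINT z:{u<..<\<eta>}. (\<eta> - z) powr (- 1/4)) = (\<eta> - u) powr (3/4) / (3/4)"
    using set_integral_powr_right[of u \<eta> \<eta> "- 1/4"] assms by simp_all
  have "\<bar>V2_kernel p \<xi> \<eta> z\<bar> \<le> b powr p * (\<eta> - z) powr (- 1/4)" if "z \<in> {u<..<\<eta>}" for z
    using that assms unfolding V2_kernel_def by (auto intro!: mult_left_mono powr_mono2' simp: mult.commute)
  note bound = set_integral_le_of_abs_le[OF _ _ set_integrable_mult_right[OF powr(1)] this]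
  show "set_integrable lborel {u<..<\<eta>} (V2_kernel p \<xi> \<eta>)"
    using bound(1) by simp
  show "(LBINT z:{u<..<\<eta>}. V2_kernel p \<xi> \<eta> z) \<le> b powr p * ((\<eta> - u) powr (3/4) / (3/4))"
    using bound(2) unfolding set_integral_mult_right powr(2) by simp
qed

lemma V2_kernel_integral_le_diag:
  fixes p u v \<xi> \<eta> :: real
  assumes "u < v" "v \<le> \<eta>" "\<eta> < \<xi>" "p \<le> 0" and "p > - 3/4 \<or> v < \<eta> \<and> p \<noteq> - 3/4"
  shows "set_integrable lborel {u<..<v} (V2_kernel p \<xi> \<eta>)"
    "(LBINT z:{u<..<v}. V2_kernel p \<xi> \<eta> z)
      \<le> ((\<eta> - u) powr (p + 3/4) - (\<eta> - v) powr (p + 3/4)) / (p + 3/4)"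
proof -
  have powr: "set_integrable lborel {u<..<v} (\<lambda>z. (\<eta> - z) powr (p - 1/4))"
    "(LBINT z:{u<..<v}. (\<eta> - z) powr (p - 1/4)) = ((\<eta> - u) powr (p + 3/4) - (\<eta> - v) powr (p + 3/4)) / (p + 3/4)"
    using set_integral_powr_right[of u v \<eta> "p - 1/4"] assms by (auto simp: add_ac)
  have "\<bar>V2_kernel p \<xi> \<eta> z\<bar> \<le> (\<eta> - z) powr (p - 1/4)" if "z \<in> {u<..<v}" for z
  proof -
    have "\<bar>V2_kernel p \<xi> \<eta> z\<bar> \<le> (\<eta> - z) powr (- 1/4) * (\<eta> - z) powr p"
      using that assms unfolding V2_kernel_def by (auto intro!: mult_left_mono powr_mono2')
    also have "\<dots> = (\<eta> - z) powr (p - 1/4)"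
      by (simp add: powr_add[symmetric])
    finally show ?thesis .
  qed
  note bound = set_integral_le_of_abs_le[OF _ _ powr(1) this]
  show "set_integrable lborel {u<..<v} (V2_kernel p \<xi> \<eta>)"
    using bound(1) by simp
  show "(LBINT z:{u<..<v}. V2_kernel p \<xi> \<eta> z)
      \<le> ((\<eta> - u) powr (p + 3/4) - (\<eta> - v) powr (p + 3/4)) / (p + 3/4)"
    using bound(2) unfolding powr(2) by simp
qed

lemma V2_kernel_integral_neg_far:
  fixes l \<xi> \<eta> :: real
  assumes "- 1/2 \<le> l" "0 < \<eta>" "2 * \<eta> \<le> \<xi>"
  shows "\<xi> powr (- 1/4) * \<eta> powr (- 1/4) * (LBINT z:{0<..<\<eta>}. V2_kernel (- l - 3/4) \<xi> \<eta> z)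
    \<le> 4/3 * 2 powr (l + 3/4) * \<xi> powr (- l - 1/2)"
proof -
  have "\<xi> powr (- 1/4) * \<eta> powr (- 1/4) * (LBINT z:{0<..<\<eta>}. V2_kernel (- l - 3/4) \<xi> \<eta> z)
      \<le> \<xi> powr (- 1/4) * \<eta> powr (- 1/4) * ((\<xi> / 2) powr (- l - 3/4) * ((\<eta> - 0) powr (3/4) / (3/4)))"
    using V2_kernel_integral_le_const(2)[of 0 \<eta> \<xi> "- l - 3/4" "\<xi> / 2"] assms
    by (intro mult_left_mono) auto
  also have "\<dots> = 4/3 * 2 powr (l + 3/4) * \<xi> powr (- l - 1) * \<eta> powr (1/2)"
    using assms by (subst ln_inj_iff[symmetric]) (simp_all add: ln_mult ln_div, simp add: field_simps)
  also have "\<dots> \<le> 4/3 * 2 powr (l + 3/4) * \<xi> powr (- l - 1) * \<xi> powr (1/2)"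
    using assms by (intro mult_left_mono powr_mono2) auto
  also have "\<dots> = 4/3 * 2 powr (l + 3/4) * \<xi> powr (- l - 1/2)"
    by (simp add: mult.assoc powr_add[symmetric]) (rule arg_cong[where f = "\<lambda>e. \<xi> powr e"], simp)
  finally show ?thesis .
qed

lemma V2_kernel_integral_neg_near:
  fixes l \<xi> \<eta> :: real
  assumes "- 1/2 \<le> l" "l < 0" "\<eta> < \<xi>" "\<xi> < 2 * \<eta>"
  shows "\<xi> powr (- 1/4) * \<eta> powr (- 1/4) * (LBINT z:{0<..<\<eta>}. V2_kernel (- l - 3/4) \<xi> \<eta> z)
    \<le> 2 powr (1/4) / (- l) * \<xi> powr (- l - 1/2)"
proof -
  have "(LBINT z:{0<..<\<eta>}. V2_kernel (- l - 3/4) \<xi> \<eta> z) \<le> \<eta> powr (- l) / (- l)"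
    using V2_kernel_integral_le_diag(2)[of 0 \<eta> \<eta> \<xi> "- l - 3/4"] assms by simp
  then have "\<xi> powr (- 1/4) * \<eta> powr (- 1/4) * (LBINT z:{0<..<\<eta>}. V2_kernel (- l - 3/4) \<xi> \<eta> z)
      \<le> \<xi> powr (- 1/4) * \<eta> powr (- 1/4) * (\<eta> powr (- l) / (- l))"
    by (rule mult_left_mono) simp
  also have "\<dots> = \<xi> powr (- 1/4) * (\<eta> powr (- 1/4) * \<eta> powr (- l)) / (- l)"
    by simp
  also have "\<dots> \<le> \<xi> powr (- 1/4) * ((\<xi> / 2) powr (- 1/4) * \<xi> powr (- l)) / (- l)"
    using assms by (intro divide_right_mono mult_left_mono mult_mono powr_mono2' powr_mono2) auto
  also have "\<xi> powr (- 1/4) * ((\<xi> / 2) powr (- 1/4) * \<xi> powr (- l)) = 2 powr (1/4) * \<xi> powr (- l - 1/2)"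
    using assms by (subst ln_inj_iff[symmetric]) (simp_all add: ln_mult ln_div, simp add: field_simps)
  finally show ?thesis
    by simp
qed

lemma V2_kernel_integral_neg:
  fixes l \<xi> \<eta> :: real
  assumes "- 1/2 \<le> l" "l < 0" "0 < \<eta>" "\<eta> < \<xi>"
  shows "\<xi> powr (- 1/4) * \<eta> powr (- 1/4) * (LBINT z:{0<..<\<eta>}. V2_kernel (- l - 3/4) \<xi> \<eta> z)
    \<le> (4/3 * 2 powr (l + 3/4) + 2 powr (1/4) / (- l)) * \<xi> powr (- l - 1/2)"
proof -
  have "0 \<le> 2 powr (1/4) / (- l)"
    using assms by (intro divide_nonneg_pos) auto
  show ?thesis
  proof (cases "2 * \<eta> \<le> \<xi>")
    case True
    show ?thesis
      by (rule order_trans[OF V2_kernel_integral_neg_far[OF assms(1,3) True]])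
        (intro mult_right_mono add_increasing2, use \<open>0 \<le> 2 powr (1/4) / (- l)\<close> in simp_all)
  next
    case False
    then have "\<xi> < 2 * \<eta>" by simp
    show ?thesis
      by (rule order_trans[OF V2_kernel_integral_neg_near[OF assms(1,2,4) \<open>\<xi> < 2 * \<eta>\<close>]])
        (intro mult_right_mono add_increasing, simp_all)
  qed
qed

lemma V2_kernel_integral_le_near:
  fixes l \<xi> \<eta> :: real
  assumes "l > 0" "\<eta> < \<xi>" "\<xi> < 2 * \<eta>"
  shows "(LBINT z:{0<..<\<eta>}. V2_kernel (- l - 3/4) \<xi> \<eta> z) \<le> (4/3 + 1/l) * (\<xi> - \<eta>) powr (- l)"
proof -
  let ?k = "V2_kernel (- l - 3/4) \<xi> \<eta>"
  define \<epsilon> m where "\<epsilon> = \<xi> - \<eta>" and "m = \<eta> - \<epsilon>"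
  have "\<epsilon> > 0" "0 < m" "m < \<eta>"
    using assms by (auto simp: \<epsilon>_def m_def)
  have "set_integrable lborel {0<..<\<eta>} ?k"
    using V2_kernel_integral_le_const(1)[of 0 \<eta> \<xi> "- l - 3/4" \<epsilon>] assms \<open>m > 0\<close> \<open>\<epsilon> > 0\<close>
    by (simp add: \<epsilon>_def)
  then have "(LBINT x=ereal 0..ereal m. ?k x) + (LBINT x=ereal m..ereal \<eta>. ?k x) = (LBINT x=ereal 0..ereal \<eta>. ?k x)"
    using \<open>0 < m\<close> \<open>m < \<eta>\<close>
    by (intro interval_integral_sum) (simp add: interval_lebesgue_integrable_def min_def max_def)
  then have "(LBINT z:{0<..<\<eta>}. ?k z) = (LBINT z:{0<..<m}. ?k z) + (LBINT z:{m<..<\<eta>}. ?k z)"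
    using \<open>0 < m\<close> \<open>m < \<eta>\<close> by (simp add: interval_integral_Ioo)
  also have "\<dots> \<le> (\<eta> powr (- l) - \<epsilon> powr (- l)) / (- l) + \<epsilon> powr (- l - 3/4) * (\<epsilon> powr (3/4) / (3/4))"
  proof (rule add_mono)
    show "(LBINT z:{0<..<m}. ?k z) \<le> (\<eta> powr (- l) - \<epsilon> powr (- l)) / (- l)"
      using V2_kernel_integral_le_diag(2)[of 0 m \<eta> \<xi> "- l - 3/4"] assms \<open>0 < m\<close> \<open>m < \<eta>\<close>
      by (simp add: m_def)
    show "(LBINT z:{m<..<\<eta>}. ?k z) \<le> \<epsilon> powr (- l - 3/4) * (\<epsilon> powr (3/4) / (3/4))"
      using V2_kernel_integral_le_const(2)[of m \<eta> \<xi> "- l - 3/4" \<epsilon>] assms \<open>m < \<eta>\<close> \<open>\<epsilon> > 0\<close>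
      by (simp add: \<epsilon>_def m_def)
  qed
  also have "\<dots> \<le> \<epsilon> powr (- l) / l + 4/3 * \<epsilon> powr (- l)"
    using assms by (intro add_mono) (auto simp: divide_simps powr_add[symmetric])
  finally show ?thesis
    by (simp add: \<epsilon>_def algebra_simps)
qed

lemma V2_kernel_integral_pos_far:
  fixes l \<xi> \<eta> :: real
  assumes "l > 0" "0 < \<eta>" "2 * \<eta> \<le> \<xi>"
  shows "(\<xi> - \<eta>) powr (l + 1) * \<xi> powr (- 1/4) * \<eta> powr (- 1/4) * (LBINT z:{0<..<\<eta>}. V2_kernel (- l - 3/4) \<xi> \<eta> z)
    \<le> 4 * 2 powr (l + 3/4) * (sqrt \<xi> - sqrt \<eta>)"
proof -
  define \<epsilon> where "\<epsilon> = \<xi> - \<eta>"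
  have "\<epsilon> > 0" "\<eta> < \<xi>" using assms by (auto simp: \<epsilon>_def)
  have "\<epsilon> powr (l + 1) * \<xi> powr (- 1/4) * \<eta> powr (- 1/4) * (LBINT z:{0<..<\<eta>}. V2_kernel (- l - 3/4) \<xi> \<eta> z)
      \<le> \<epsilon> powr (l + 1) * \<xi> powr (- 1/4) * \<eta> powr (- 1/4) * ((\<xi> / 2) powr (- l - 3/4) * ((\<eta> - 0) powr (3/4) / (3/4)))"
    using V2_kernel_integral_le_const(2)[of 0 \<eta> \<xi> "- l - 3/4" "\<xi> / 2"] assms
    by (intro mult_left_mono) auto
  also have "\<dots> = 4/3 * 2 powr (l + 3/4) * (\<epsilon> / \<xi>) powr (l + 1) * sqrt \<eta>"
    using assms \<open>\<epsilon> > 0\<close>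
    by (subst ln_inj_iff[symmetric]) (simp_all add: ln_mult ln_div ln_sqrt, simp add: field_simps)
  also have "\<dots> \<le> 4/3 * 2 powr (l + 3/4) * 1 * (3 * (sqrt \<xi> - sqrt \<eta>))"
  proof (intro mult_mono)
    show "(\<epsilon> / \<xi>) powr (l + 1) \<le> 1"
      using assms \<open>\<epsilon> > 0\<close> by (intro powr_le1) (auto simp: \<epsilon>_def)
    show "sqrt \<eta> \<le> 3 * (sqrt \<xi> - sqrt \<eta>)"
      using sqrt_diff_lower_bounds(4) assms \<open>\<eta> < \<xi>\<close> by blast
  qed (use assms in simp_all)
  also have "\<dots> = 4 * 2 powr (l + 3/4) * (sqrt \<xi> - sqrt \<eta>)"
    by simp
  finally show ?thesis
    by (simp add: \<epsilon>_def)
qed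

lemma V2_kernel_integral_pos_near:
  fixes l \<xi> \<eta> :: real
  assumes "l > 0" "\<eta> < \<xi>" "\<xi> < 2 * \<eta>"
  shows "(\<xi> - \<eta>) powr (l + 1) * \<xi> powr (- 1/4) * \<eta> powr (- 1/4) * (LBINT z:{0<..<\<eta>}. V2_kernel (- l - 3/4) \<xi> \<eta> z)
    \<le> 2 * 2 powr (1/4) * (4/3 + 1/l) * (sqrt \<xi> - sqrt \<eta>)"
proof -
  define \<epsilon> where "\<epsilon> = \<xi> - \<eta>"
  have "\<epsilon> > 0" "0 < \<eta>" using assms by (auto simp: \<epsilon>_def)
  have "\<epsilon> powr (l + 1) * \<xi> powr (- 1/4) * \<eta> powr (- 1/4) * (LBINT z:{0<..<\<eta>}. V2_kernel (- l - 3/4) \<xi> \<eta> z)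
      \<le> \<epsilon> powr (l + 1) * \<xi> powr (- 1/4) * \<eta> powr (- 1/4) * ((4/3 + 1/l) * \<epsilon> powr (- l))"
    using V2_kernel_integral_le_near[OF assms] unfolding \<epsilon>_def by (intro mult_left_mono) auto
  also have "\<dots> = (4/3 + 1/l) * \<epsilon> * (\<xi> powr (- 1/4) * \<eta> powr (- 1/4))"
    using \<open>\<epsilon> > 0\<close> by (simp add: mult_ac powr_add[symmetric])
  also have "\<dots> \<le> (4/3 + 1/l) * \<epsilon> * (\<xi> powr (- 1/4) * (\<xi> / 2) powr (- 1/4))"
    using assms \<open>\<epsilon> > 0\<close> by (intro mult_left_mono powr_mono2') auto
  also have "\<xi> powr (- 1/4) * (\<xi> / 2) powr (- 1/4) = 2 powr (1/4) / sqrt \<xi>"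
    using assms \<open>0 < \<eta>\<close>
    by (subst ln_inj_iff[symmetric]) (simp_all add: ln_mult ln_div ln_sqrt, simp add: field_simps)
  also have "(4/3 + 1/l) * \<epsilon> * (2 powr (1/4) / sqrt \<xi>) = 2 powr (1/4) * (4/3 + 1/l) * (\<epsilon> / sqrt \<xi>)"
    by simp
  also have "\<dots> \<le> 2 powr (1/4) * (4/3 + 1/l) * (2 * (sqrt \<xi> - sqrt \<eta>))"
    using sqrt_diff_lower_bounds(1)[OF \<open>0 < \<eta>\<close> assms(2)] assms
    by (intro mult_left_mono) (auto simp: \<epsilon>_def)
  also have "\<dots> = 2 * 2 powr (1/4) * (4/3 + 1/l) * (sqrt \<xi> - sqrt \<eta>)"
    by simp
  finally show ?thesis
    by (simp add: \<epsilon>_def)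
qed

lemma V2_kernel_integral_pos:
  fixes l \<xi> \<eta> :: real
  assumes "l > 0" "0 < \<eta>" "\<eta> < \<xi>"
  shows "(\<xi> - \<eta>) powr (l + 1) * \<xi> powr (- 1/4) * \<eta> powr (- 1/4) * (LBINT z:{0<..<\<eta>}. V2_kernel (- l - 3/4) \<xi> \<eta> z)
    \<le> (4 * 2 powr (l + 3/4) + 2 * 2 powr (1/4) * (4/3 + 1/l)) * (sqrt \<xi> - sqrt \<eta>)"
proof -
  have "0 \<le> sqrt \<xi> - sqrt \<eta>" "0 \<le> 2 * 2 powr (1/4) * (4/3 + 1/l)"
    using assms by auto
  show ?thesis
  proof (cases "2 * \<eta> \<le> \<xi>")
    case True
    show ?thesis
      by (rule order_trans[OF V2_kernel_integral_pos_far[OF assms(1,2) True]])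
        (intro mult_right_mono add_increasing2, use \<open>0 \<le> 2 * 2 powr (1/4) * (4/3 + 1/l)\<close> \<open>0 \<le> sqrt \<xi> - sqrt \<eta>\<close> in simp_all)
  next
    case False
    then have "\<xi> < 2 * \<eta>" by simp
    show ?thesis
      by (rule order_trans[OF V2_kernel_integral_pos_near[OF assms(1,3) \<open>\<xi> < 2 * \<eta>\<close>]])
        (intro mult_right_mono add_increasing, use assms \<open>0 \<le> sqrt \<xi> - sqrt \<eta>\<close> in simp_all)
  qed
qed

lemma V2_integral_le_kernel:
  fixes l K \<xi> \<eta> :: real
  assumes "l \<ge> - 1/2" "K \<ge> 0"
    and K: "\<And>x. x \<le> 0 \<Longrightarrow> \<bar>hyp2f1 (1 + l) (1 + l) (2 + 2 * l) x\<bar> \<le> K * (1 - x) powr (- l - 3/4)"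
    and "0 < \<eta>" "\<eta> < \<xi>"
  shows "set_integrable lborel {0<..<\<eta>} (\<lambda>z. V2 l z \<xi> \<eta> * z powr (l - 1/2))"
    "(LBINT z:{0<..<\<eta>}. V2 l z \<xi> \<eta> * z powr (l - 1/2))
      \<le> \<bar>V2_prefactor l\<bar> * K * (\<xi> - \<eta>) powr (1 + 2 * l) *
        (\<xi> powr (- 1/4) * \<eta> powr (- 1/4) * (LBINT z:{0<..<\<eta>}. V2_kernel (- l - 3/4) \<xi> \<eta> z))"
proof -
  define D where "D = \<bar>V2_prefactor l\<bar> * K * (\<xi> - \<eta>) powr (1 + 2 * l) * \<xi> powr (- 1/4) * \<eta> powr (- 1/4)"
  have le: "\<bar>V2 l z \<xi> \<eta> * z powr (l - 1/2)\<bar> \<le> D * V2_kernel (- l - 3/4) \<xi> \<eta> z" if "z \<in> {0<..<\<eta>}" for z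
    using V2_powr_le[OF assms(1,2) K, of z \<eta> \<xi>] that assms unfolding D_def V2_kernel_def by simp
  have kernel: "set_integrable lborel {0<..<\<eta>} (V2_kernel (- l - 3/4) \<xi> \<eta>)"
    using V2_kernel_integral_le_const(1)[of 0 \<eta> \<xi> "- l - 3/4" "\<xi> - \<eta>"] assms by simp
  have meas: "(\<lambda>z. V2 l z \<xi> \<eta> * z powr (l - 1/2)) \<in> borel_measurable lborel"
    by measurable
  note bound = set_integral_le_of_abs_le[OF _ meas set_integrable_mult_right[OF kernel] le]
  show "set_integrable lborel {0<..<\<eta>} (\<lambda>z. V2 l z \<xi> \<eta> * z powr (l - 1/2))"
    using bound(1) by simp
  show "(LBINT z:{0<..<\<eta>}. V2 l z \<xi> \<eta> * z powr (l - 1/2))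
      \<le> \<bar>V2_prefactor l\<bar> * K * (\<xi> - \<eta>) powr (1 + 2 * l) *
        (\<xi> powr (- 1/4) * \<eta> powr (- 1/4) * (LBINT z:{0<..<\<eta>}. V2_kernel (- l - 3/4) \<xi> \<eta> z))"
    using bound(2) by (simp add: D_def set_integral_mult_right mult_ac)
qed

lemma V2_integral_le_neg:
  fixes l K \<xi> \<eta> :: real
  assumes "- 1/2 \<le> l" "l < 0" "K \<ge> 0"
    and K: "\<And>x. x \<le> 0 \<Longrightarrow> \<bar>hyp2f1 (1 + l) (1 + l) (2 + 2 * l) x\<bar> \<le> K * (1 - x) powr (- l - 3/4)"
    and "0 < \<eta>" "\<eta> < \<xi>"
  shows "(LBINT z:{0<..<\<eta>}. V2 l z \<xi> \<eta> * z powr (l - 1/2))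
    \<le> \<bar>V2_prefactor l\<bar> * K * (4/3 * 2 powr (l + 3/4) + 2 powr (1/4) / (- l)) *
      (\<xi> - \<eta>) powr (l + 1/2) * (1 - \<eta> / \<xi>) powr (l + 1/2)"
proof -
  define C A where "C = \<bar>V2_prefactor l\<bar> * K" and "A = 4/3 * 2 powr (l + 3/4) + 2 powr (1/4) / (- l)"
  have "(LBINT z:{0<..<\<eta>}. V2 l z \<xi> \<eta> * z powr (l - 1/2))
      \<le> C * (\<xi> - \<eta>) powr (1 + 2 * l) *
        (\<xi> powr (- 1/4) * \<eta> powr (- 1/4) * (LBINT z:{0<..<\<eta>}. V2_kernel (- l - 3/4) \<xi> \<eta> z))"
    unfolding C_def by (rule V2_integral_le_kernel(2)[OF assms(1,3) K assms(5,6)])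
  also have "\<dots> \<le> C * (\<xi> - \<eta>) powr (1 + 2 * l) * (A * \<xi> powr (- l - 1/2))"
    unfolding A_def using V2_kernel_integral_neg[OF assms(1,2,5,6)] \<open>K \<ge> 0\<close>
    by (intro mult_left_mono) (auto simp: C_def)
  also have "(\<xi> - \<eta>) powr (1 + 2 * l) * \<xi> powr (- l - 1/2) = (\<xi> - \<eta>) powr (l + 1/2) * (1 - \<eta> / \<xi>) powr (l + 1/2)"
  proof -
    have "1 - \<eta> / \<xi> = (\<xi> - \<eta>) / \<xi>"
      using assms by (simp add: field_simps)
    then show ?thesis
      using assms by (subst ln_inj_iff[symmetric]) (simp_all add: ln_mult ln_div, simp add: field_simps)
  qed
  then have "C * (\<xi> - \<eta>) powr (1 + 2 * l) * (A * \<xi> powr (- l - 1/2))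
      = C * A * (\<xi> - \<eta>) powr (l + 1/2) * (1 - \<eta> / \<xi>) powr (l + 1/2)"
    by (simp add: mult_ac)
  finally show ?thesis
    unfolding C_def A_def .
qed

lemma V2_integral_le_pos:
  fixes l K \<xi> \<eta> :: real
  assumes "l > 0" "K \<ge> 0"
    and K: "\<And>x. x \<le> 0 \<Longrightarrow> \<bar>hyp2f1 (1 + l) (1 + l) (2 + 2 * l) x\<bar> \<le> K * (1 - x) powr (- l - 3/4)"
    and "0 < \<eta>" "\<eta> < \<xi>"
  shows "(LBINT z:{0<..<\<eta>}. V2 l z \<xi> \<eta> * z powr (l - 1/2))
    \<le> \<bar>V2_prefactor l\<bar> * K * (4 * 2 powr (l + 3/4) + 2 * 2 powr (1/4) * (4/3 + 1/l)) *
      (\<xi> - \<eta>) powr l * (sqrt \<xi> - sqrt \<eta>)"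
proof -
  define C where "C = \<bar>V2_prefactor l\<bar> * K * (\<xi> - \<eta>) powr l"
  have "C \<ge> 0"
    using assms by (simp add: C_def)
  have "(LBINT z:{0<..<\<eta>}. V2 l z \<xi> \<eta> * z powr (l - 1/2))
      \<le> C * ((\<xi> - \<eta>) powr (l + 1) * \<xi> powr (- 1/4) * \<eta> powr (- 1/4) *
        (LBINT z:{0<..<\<eta>}. V2_kernel (- l - 3/4) \<xi> \<eta> z))"
  proof -
    have "(\<xi> - \<eta>) powr (1 + 2 * l) = (\<xi> - \<eta>) powr (l + (l + 1))"
      by (simp add: add_ac)
    then have "(\<xi> - \<eta>) powr (1 + 2 * l) = (\<xi> - \<eta>) powr l * (\<xi> - \<eta>) powr (l + 1)"
      by (simp only: powr_add)
    then show ?thesis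
      using V2_integral_le_kernel(2)[OF _ assms(2) K assms(4,5)] assms by (simp add: C_def mult_ac)
  qed
  also have "\<dots> \<le> C * ((4 * 2 powr (l + 3/4) + 2 * 2 powr (1/4) * (4/3 + 1/l)) * (sqrt \<xi> - sqrt \<eta>))"
    using V2_kernel_integral_pos[OF assms(1,4,5)] \<open>C \<ge> 0\<close> by (rule mult_left_mono)
  finally show ?thesis
    by (simp add: C_def mult_ac)
qed

theorem lemmaA2:
  fixes l :: real
  assumes "l \<ge> - 1 / 2"
  shows "\<exists>A1 A2 :: real. \<forall>\<xi> \<eta> :: real. 0 < \<eta> \<and> \<eta> < \<xi> \<longrightarrow>
     (set_integrable lborel {\<eta><..<\<xi>} (\<lambda>z. V1 l z \<xi> \<eta> * z powr (l - 1 / 2)) \<and>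
      (LBINT z:{\<eta><..<\<xi>}. V1 l z \<xi> \<eta> * z powr (l - 1 / 2))
        \<le> A1 * (\<xi> - \<eta>) powr l * (sqrt \<xi> - sqrt \<eta>)) \<and>
     (l > 0 \<longrightarrow>
      set_integrable lborel {0<..<\<eta>} (\<lambda>z. V2 l z \<xi> \<eta> * z powr (l - 1 / 2)) \<and>
      (LBINT z:{0<..<\<eta>}. V2 l z \<xi> \<eta> * z powr (l - 1 / 2))
        \<le> A2 * (\<xi> - \<eta>) powr l * (sqrt \<xi> - sqrt \<eta>)) \<and>
     (l < 0 \<longrightarrow>
      set_integrable lborel {0<..<\<eta>} (\<lambda>z. V2 l z \<xi> \<eta> * z powr (l - 1 / 2)) \<and>
      (LBINT z:{0<..<\<eta>}. V2 l z \<xi> \<eta> * z powr (l - 1 / 2))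
        \<le> A2 * (\<xi> - \<eta>) powr (l + 1 / 2) * (1 - \<eta> / \<xi>) powr (l + 1 / 2))"
proof -
  obtain K1 where "K1 \<ge> 0" and K1: "\<And>x. x \<le> 0 \<Longrightarrow> \<bar>hyp2f1 (- l) (- l) 1 x\<bar> \<le> K1 * (1 - x) powr (l + 1/4)"
    using abs_hyp2f1_diag_le_powr[of 1 "- l" "1/4"] assms by (auto simp: add.commute)
  obtain K2 where "K2 \<ge> 0"
    and K2: "\<And>x. x \<le> 0 \<Longrightarrow> \<bar>hyp2f1 (1 + l) (1 + l) (2 + 2 * l) x\<bar> \<le> K2 * (1 - x) powr (- l - 3/4)"
    using abs_hyp2f1_diag_le_powr[of "2 + 2 * l" "1 + l" "1/4"] assms by (auto simp: algebra_simps)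
  define A2 where "A2 = \<bar>V2_prefactor l\<bar> * K2 *
    (if l > 0 then 4 * 2 powr (l + 3/4) + 2 * 2 powr (1/4) * (4/3 + 1/l)
     else 4/3 * 2 powr (l + 3/4) + 2 powr (1/4) / (- l))"
  show ?thesis
  proof (rule exI[of _ "4 * K1"], rule exI[of _ A2], intro allI impI conjI)
    fix \<xi> \<eta> :: real
    assume "0 < \<eta> \<and> \<eta> < \<xi>"
    then have "0 < \<eta>" "\<eta> < \<xi>" by auto
    note V1 = V1_integral_le[OF \<open>K1 \<ge> 0\<close> K1 this]
    note V2 = V2_integral_le_kernel(1)[OF assms \<open>K2 \<ge> 0\<close> K2 \<open>0 < \<eta>\<close> \<open>\<eta> < \<xi>\<close>]
    show "set_integrable lborel {\<eta><..<\<xi>} (\<lambda>z. V1 l z \<xi> \<eta> * z powr (l - 1 / 2))"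
      using V1(1) by simp
    show "(LBINT z:{\<eta><..<\<xi>}. V1 l z \<xi> \<eta> * z powr (l - 1 / 2)) \<le> 4 * K1 * (\<xi> - \<eta>) powr l * (sqrt \<xi> - sqrt \<eta>)"
      using V1(2) by simp
    show "set_integrable lborel {0<..<\<eta>} (\<lambda>z. V2 l z \<xi> \<eta> * z powr (l - 1 / 2))"
      if "l > 0" using V2 by simp
    show "set_integrable lborel {0<..<\<eta>} (\<lambda>z. V2 l z \<xi> \<eta> * z powr (l - 1 / 2))"
      if "l < 0" using V2 by simp
    show "(LBINT z:{0<..<\<eta>}. V2 l z \<xi> \<eta> * z powr (l - 1 / 2)) \<le> A2 * (\<xi> - \<eta>) powr l * (sqrt \<xi> - sqrt \<eta>)"
      if "l > 0"
      using V2_integral_le_pos[OF that \<open>K2 \<ge> 0\<close> K2 \<open>0 < \<eta>\<close> \<open>\<eta> < \<xi>\<close>] that by (simp add: A2_def)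
    show "(LBINT z:{0<..<\<eta>}. V2 l z \<xi> \<eta> * z powr (l - 1 / 2))
        \<le> A2 * (\<xi> - \<eta>) powr (l + 1 / 2) * (1 - \<eta> / \<xi>) powr (l + 1 / 2)" if "l < 0"
      using V2_integral_le_neg[OF _ that \<open>K2 \<ge> 0\<close> K2 \<open>0 < \<eta>\<close> \<open>\<eta> < \<xi>\<close>] assms that by (simp add: A2_def)
  qed
qed

end
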